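(* Let $U=B(c,R)\cap\mathbb{Z}[\mathrm{i}]$ for some $c\in\mathbb{C}$, $R>0$, let $p,q\in\mathbb{Z}[\mathrm{i}]$ be $\mathbb{Z}$-linearly independent, and suppose the configuration $(a_z)_{z\in\mathbb{Z}[\mathrm{i}]}$ has step-period $(p,q)$ in $U$. Then $(a_z)$ has period $(p,q)$ in $U^{\circ r}$, where $r=|p|+|q|$.
   Context: For $\mathbb{Z}$-linearly independent $p_1,p_2\in\mathbb{Z}[\mathrm{i}]$, $\langle p_1,p_2\rangle=\{m_1p_1+m_2p_2:m_i\in\mathbb{Z}\}$. For $U\subseteq\mathbb{Z}[\mathrm{i}]$: $(a_z)$ has period $(p_1,p_2)$ in $U$ if for all $z_1,z_2\in U$ with $z_1-z_2\in\langle p_1,p_2\rangle$ we have $a_{z_1}=a_{z_2}$; $(a_z)$ has step-period $(p_1,p_2)$ in $U$ if whenever $z\in U$ and $z+p_i\in U$ for some $i\in\{1,2\}$, then $a_z=a_{z+p_i}$. For $V\subseteq\mathbb{Z}[\mathrm{i}]$ and $r>0$, $V^{\circ r}=\{z\in V:B(z,r)\cap\mathbb{Z}[\mathrm{i}]\subseteq V\}$, where $B(z,r)$ is the ball of centre $z$ and radius $r$ in $\mathbb{C}$. *)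

theory Defs
  imports "HOL-Analysis.Analysis"
begin

definition gauss_ints :: "complex set" where
  "gauss_ints = {z. Re z \<in> \<int> \<and> Im z \<in> \<int>}"

definition Z_lin_indep :: "complex \<Rightarrow> complex \<Rightarrow> bool" where
  "Z_lin_indep p1 p2 \<longleftrightarrow>
     (\<forall>m1 m2 :: int. of_int m1 * p1 + of_int m2 * p2 = 0 \<longrightarrow> m1 = 0 \<and> m2 = 0)"

definition lattice :: "complex \<Rightarrow> complex \<Rightarrow> complex set" where
  "lattice p1 p2 = {of_int m1 * p1 + of_int m2 * p2 | m1 m2 :: int. True}"

definition has_period :: "(complex \<Rightarrow> 'a) \<Rightarrow> complex \<Rightarrow> complex \<Rightarrow> complex set \<Rightarrow> bool" where
  "has_period a p1 p2 U \<longleftrightarrow>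
     (\<forall>z1\<in>U. \<forall>z2\<in>U. z1 - z2 \<in> lattice p1 p2 \<longrightarrow> a z1 = a z2)"

definition has_step_period :: "(complex \<Rightarrow> 'a) \<Rightarrow> complex \<Rightarrow> complex \<Rightarrow> complex set \<Rightarrow> bool" where
  "has_step_period a p1 p2 U \<longleftrightarrow>
     (\<forall>z\<in>U. \<forall>w\<in>{p1, p2}. z + w \<in> U \<longrightarrow> a z = a (z + w))"

definition inner_part :: "complex set \<Rightarrow> real \<Rightarrow> complex set" where
  "inner_part V r = {z \<in> V. ball z r \<inter> gauss_ints \<subseteq> V}"

end

theory Submission
  imports Defs
begin

text \<open>Write \<open>z\<^sub>1 - z\<^sub>2 = m P + n Q\<close> with \<open>m, n \<ge> 0\<close>, \<open>P = \<plusminus>p\<close> and \<open>Q = \<plusminus>q\<close>. The lattice path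
  from \<open>z\<^sub>2\<close> to \<open>z\<^sub>1\<close> whose \<open>k\<close>-th point is \<open>z\<^sub>2 + i P + (k - i) Q\<close> with \<open>i = \<lfloor>k m / (m + n)\<rfloor>\<close>
  takes steps \<open>P\<close> and \<open>Q\<close> and stays in the parallelogram spanned by the segment \<open>[z\<^sub>2, z\<^sub>1]\<close>
  and its translate by \<open>Q - P\<close>. Since \<open>p\<close> and \<open>q\<close> are not parallel, \<open>|Q - P| < |p| + |q|\<close>, so
  the four corners of this parallelogram lie in \<open>U\<close> whenever \<open>z\<^sub>1, z\<^sub>2\<close> lie in the inner part;
  by convexity of the disc the whole path lies in \<open>U\<close>, and the step-period carries the value
  of \<open>a\<close> along it.\<close>

lemma gauss_ints_add: "x \<in> gauss_ints \<Longrightarrow> y \<in> gauss_ints \<Longrightarrow> x + y \<in> gauss_ints"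
  by (auto simp: gauss_ints_def)

lemma gauss_ints_minus: "x \<in> gauss_ints \<Longrightarrow> - x \<in> gauss_ints"
  by (auto simp: gauss_ints_def)

lemma gauss_ints_diff: "x \<in> gauss_ints \<Longrightarrow> y \<in> gauss_ints \<Longrightarrow> x - y \<in> gauss_ints"
  by (auto simp: gauss_ints_def)

lemma gauss_ints_of_nat_mult: "x \<in> gauss_ints \<Longrightarrow> of_nat k * x \<in> gauss_ints"
  by (auto simp: gauss_ints_def)

lemma Z_lin_indep_imp_Im_cnj_mult_neq_0:
  assumes "p \<in> gauss_ints" "q \<in> gauss_ints" "Z_lin_indep p q"
  shows "Im (cnj p * q) \<noteq> 0"
proof
  assume Im0: "Im (cnj p * q) = 0"
  have indep: "m1 = 0 \<and> m2 = 0" if "of_int m1 * p + of_int m2 * q = 0" for m1 m2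
    using assms(3) that unfolding Z_lin_indep_def by blast
  have "Re (cnj p * q) \<in> \<int>" "(norm p)\<^sup>2 \<in> \<int>"
    using assms(1,2) by (auto simp: gauss_ints_def cmod_power2)
  then obtain k n :: int where k: "Re (cnj p * q) = of_int k" and n: "(norm p)\<^sup>2 = of_int n"
    by (auto elim!: Ints_cases)
  \<comment> \<open>if \<open>cnj p * q\<close> is real, then \<open>|p|\<^sup>2 q = p (cnj p * q)\<close> is an integer relation\<close>
  have "p * cnj p = of_int n"
    by (metis complex_norm_square n of_real_of_int_eq)
  then have "of_int n * q = p * (cnj p * q)"
    by (simp add: mult_ac)
  also have "cnj p * q = of_int k"
    using Im0 k by (simp add: complex_eq_iff)
  finally have "of_int (- k) * p + of_int n * q = 0"
    by (simp add: mult_ac)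
  then have "n = 0"
    using indep by blast
  then have "p = 0"
    using n by simp
  then show False
    using indep[of 1 0] by simp
qed

lemma norm_diff_less_if_Im_cnj_mult_neq_0:
  fixes u v :: complex
  assumes "Im (cnj u * v) \<noteq> 0"
  shows "norm (v - u) < norm u + norm v"
proof -
  have "u \<noteq> 0"
    using assms by auto
  have "norm (v + - u) \<noteq> norm v + norm (- u)"
  proof
    assume "norm (v + - u) = norm v + norm (- u)"
    then have "of_real (norm v) * - u = of_real (norm u) * v"
      using norm_triangle_eq[of v "- u"] by (simp add: scaleR_conv_of_real)
    then have "Im (cnj u * (of_real (norm v) * - u)) = Im (cnj u * (of_real (norm u) * v))"
      by simp
    then have "norm u * Im (cnj u * v) = 0"
      by (auto simp: algebra_simps)
    with assms \<open>u \<noteq> 0\<close> show False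
      by simp
  qed
  moreover have "norm (v - u) \<le> norm u + norm v"
    using norm_triangle_ineq4[of v u] by simp
  ultimately show ?thesis
    by simp
qed

lemma inner_part_add:
  assumes "V \<subseteq> gauss_ints" "z \<in> inner_part V r" "d \<in> gauss_ints" "norm d < r"
  shows "z + d \<in> V"
proof -
  have "z + d \<in> ball z r"
    using assms(4) by (simp add: dist_norm)
  moreover have "z + d \<in> gauss_ints"
    using assms(1-3) by (auto simp: inner_part_def intro: gauss_ints_add)
  ultimately show ?thesis
    using assms(2) by (auto simp: inner_part_def)
qed

lemma has_step_period_uminus:
  assumes "has_step_period a p q U" "P \<in> {p, - p}" "Q \<in> {q, - q}"
  shows "has_step_period a P Q U"
  unfolding has_step_period_def
proof (intro ballI impI)
  fix z w
  assume "z \<in> U" "w \<in> {P, Q}" "z + w \<in> U"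
  have step: "a z' = a (z' + w')" if "z' \<in> U" "w' \<in> {p, q}" "z' + w' \<in> U" for z' w'
    using assms(1) that unfolding has_step_period_def by blast
  consider "w \<in> {p, q}" | "- w \<in> {p, q}"
    using \<open>w \<in> {P, Q}\<close> assms(2,3) by auto
  then show "a z = a (z + w)"
  proof cases
    case 1
    then show ?thesis
      using step \<open>z \<in> U\<close> \<open>z + w \<in> U\<close> by blast
  next
    case 2
    then show ?thesis
      using step[of "z + w" "- w"] \<open>z \<in> U\<close> \<open>z + w \<in> U\<close> by simp
  qed
qed

lemma of_int_mult_eq_of_nat_mult_sign:
  fixes p :: "'a::ring_1"
  shows "\<exists>P \<in> {p, - p}. of_int k * p = of_nat (nat \<bar>k\<bar>) * P"
  by (cases "k \<ge> 0") auto

lemma lattice_eq_of_nat_mult_signs: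
  assumes "z \<in> lattice p q"
  obtains P Q m n where "P \<in> {p, - p}" "Q \<in> {q, - q}" "z = of_nat m * P + of_nat n * Q"
proof -
  obtain k l :: int where z: "z = of_int k * p + of_int l * q"
    using assms unfolding lattice_def by blast
  obtain P where P: "P \<in> {p, - p}" "of_int k * p = of_nat (nat \<bar>k\<bar>) * P"
    using of_int_mult_eq_of_nat_mult_sign by blast
  obtain Q where Q: "Q \<in> {q, - q}" "of_int l * q = of_nat (nat \<bar>l\<bar>) * Q"
    using of_int_mult_eq_of_nat_mult_sign by blast
  have "z = of_nat (nat \<bar>k\<bar>) * P + of_nat (nat \<bar>l\<bar>) * Q"
    unfolding z P(2) Q(2) ..
  with P(1) Q(1) show ?thesis
    by (rule that)
qed

lemma Suc_mult_div_cases: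
  fixes k m n :: nat
  shows "Suc k * m div (m + n) = k * m div (m + n) \<or> Suc k * m div (m + n) = Suc (k * m div (m + n))"
proof (cases "m + n = 0")
  case False
  have "k * m div (m + n) \<le> Suc k * m div (m + n)"
    by (simp add: div_le_mono)
  moreover have "Suc k * m div (m + n) \<le> (k * m + (m + n)) div (m + n)"
    by (simp add: div_le_mono)
  moreover have "(k * m + (m + n)) div (m + n) = Suc (k * m div (m + n))"
    using False by simp
  ultimately show ?thesis
    by linarith
qed simp

lemma mult_div_add_le:
  fixes k m n :: nat
  shows "k * m div (m + n) \<le> k"
proof -
  have "k * m div (m + n) \<le> k * (m + n) div (m + n)"
    by (intro div_le_mono) simp
  also have "\<dots> \<le> k"
    by (cases "m + n = 0") simp_all
  finally show ?thesis .
qed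

lemma convex_lattice_path_mem:
  fixes z z' p q :: "'a::real_vector"
  assumes S: "convex S" "z \<in> S" "z + (q - p) \<in> S" "z' \<in> S" "z' + (q - p) \<in> S"
    and z': "z' = z + real m *\<^sub>R p + real n *\<^sub>R q" and "k \<le> m + n"
  shows "z + real (k * m div (m + n)) *\<^sub>R p + real (k - k * m div (m + n)) *\<^sub>R q \<in> S"
proof (cases "m + n = 0")
  case True
  then show ?thesis
    using \<open>k \<le> m + n\<close> \<open>z \<in> S\<close> by simp
next
  case False
  define N where "N = m + n"
  define i where "i = k * m div N"
  define l where "l = real k / real N"
  define t where "t = real (k * m mod N) / real N"
  have N: "real N > 0"
    using False unfolding N_def by (metis of_nat_0_less_iff not_gr0)
  have "real k * real m = real N * real i + real (k * m mod N)"
    unfolding i_def by (metis div_mult_mod_eq of_nat_add of_nat_mult mult.commute)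
  then have i: "real i = l * real m - t"
    using N by (simp add: l_def t_def field_simps)
  have "real (k - i) = real k - real i"
    using mult_div_add_le[of k m n] by (simp add: i_def N_def)
  also have "\<dots> = l * real n + t"
    using N i by (simp add: l_def N_def field_simps)
  finally have j: "real (k - i) = l * real n + t" .
  have l: "0 \<le> l" "l \<le> 1"
    using \<open>k \<le> m + n\<close> N by (simp_all add: l_def N_def)
  have "k * m mod N < N"
    using False by (simp add: N_def)
  then have t: "0 \<le> t" "t \<le> 1"
    using N by (simp_all add: t_def)
  \<comment> \<open>the path point lies on the segment from \<open>z\<close> to \<open>z'\<close>, shifted by \<open>t (q - p)\<close>\<close>
  have shifted: "w + t *\<^sub>R (q - p) \<in> S" if "w \<in> S" "w + (q - p) \<in> S" for w
    using convexD[OF S(1) that, of "1 - t" t] t by (simp add: algebra_simps)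
  have "(1 - l) *\<^sub>R (z + t *\<^sub>R (q - p)) + l *\<^sub>R (z' + t *\<^sub>R (q - p)) \<in> S"
    using shifted S l by (intro convexD) auto
  moreover have "(1 - l) *\<^sub>R (z + t *\<^sub>R (q - p)) + l *\<^sub>R (z' + t *\<^sub>R (q - p))
      = z + real i *\<^sub>R p + real (k - i) *\<^sub>R q"
    unfolding z' i j by (simp add: algebra_simps)
  ultimately show ?thesis
    by (simp add: i_def N_def)
qed

lemma has_step_period_lattice_path_eq:
  fixes a :: "complex \<Rightarrow> 'a"
  assumes S: "convex S" and U: "U = S \<inter> gauss_ints"
    and pq: "p \<in> gauss_ints" "q \<in> gauss_ints" and a: "has_step_period a p q U"
    and ends: "z \<in> U" "z + (q - p) \<in> U" "z' \<in> U" "z' + (q - p) \<in> U"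
    and z': "z' = z + of_nat m * p + of_nat n * q"
  shows "a z' = a z"
proof -
  define i where "i k = k * m div (m + n)" for k
  define w where "w k = z + of_nat (i k) * p + of_nat (k - i k) * q" for k
  have w_mem: "w k \<in> U" if "k \<le> m + n" for k
  proof -
    have "z' = z + real m *\<^sub>R p + real n *\<^sub>R q"
      using z' by (simp add: scaleR_conv_of_real)
    then have "w k \<in> S"
      using convex_lattice_path_mem[OF S _ _ _ _ _ that] ends U
      by (simp add: w_def i_def scaleR_conv_of_real)
    moreover have "w k \<in> gauss_ints"
      using ends U pq by (simp add: w_def gauss_ints_add gauss_ints_of_nat_mult)
    ultimately show ?thesis
      using U by simp
  qed
  have w_step: "a (w (Suc k)) = a (w k)" if "k < m + n" for k
  proof -
    have "i k \<le> k"
      by (simp add: i_def mult_div_add_le)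
    consider "i (Suc k) = i k" | "i (Suc k) = Suc (i k)"
      using Suc_mult_div_cases[of k m n] unfolding i_def by blast
    then have "w (Suc k) = w k + q \<or> w (Suc k) = w k + p"
      by cases (simp_all add: w_def \<open>i k \<le> k\<close> Suc_diff_le algebra_simps)
    then obtain d where d: "d \<in> {p, q}" "w (Suc k) = w k + d"
      by blast
    moreover have "w k \<in> U" "w k + d \<in> U"
      using w_mem[of k] w_mem[of "Suc k"] that d(2) by simp_all
    ultimately have "a (w k) = a (w k + d)"
      using a unfolding has_step_period_def by blast
    then show ?thesis
      using d by simp
  qed
  have walk: "a (w k) = a z" if "k \<le> m + n" for k
    using that
  proof (induction k)
    case 0
    then show ?case
      by (simp add: w_def i_def)
  next
    case (Suc k)
    then show ?case
      using w_step by simp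
  qed
  have "w (m + n) = z'"
    by (cases "m + n = 0") (simp_all add: w_def i_def z')
  then show ?thesis
    using walk[of "m + n"] by simp
qed

theorem lemma4p4:
  fixes a :: "complex \<Rightarrow> 'a" and c p q :: complex and R :: real and U :: "complex set"
  assumes "U = ball c R \<inter> gauss_ints"
    and "R > 0"
    and "p \<in> gauss_ints" and "q \<in> gauss_ints"
    and "Z_lin_indep p q"
    and "has_step_period a p q U"
  shows "has_period a p q (inner_part U (norm p + norm q))"
  unfolding has_period_def
proof (intro ballI impI)
  fix z1 z2
  assume z12: "z1 \<in> inner_part U (norm p + norm q)" "z2 \<in> inner_part U (norm p + norm q)"
    and "z1 - z2 \<in> lattice p q"
  obtain P Q m n where P: "P \<in> {p, - p}" and Q: "Q \<in> {q, - q}"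
    and "z1 - z2 = of_nat m * P + of_nat n * Q"
    using \<open>z1 - z2 \<in> lattice p q\<close> by (rule lattice_eq_of_nat_mult_signs)
  then have z1: "z1 = z2 + of_nat m * P + of_nat n * Q"
    by (simp add: algebra_simps)
  have PQ: "P \<in> gauss_ints" "Q \<in> gauss_ints"
    using P Q assms(3,4) gauss_ints_minus by auto
  have "norm (Q - P) < norm P + norm Q"
    using Z_lin_indep_imp_Im_cnj_mult_neq_0[OF assms(3-5)] P Q
    by (intro norm_diff_less_if_Im_cnj_mult_neq_0) auto
  also have "norm P + norm Q = norm p + norm q"
    using P Q by auto
  finally have "norm (Q - P) < norm p + norm q" .
  moreover have "U \<subseteq> gauss_ints"
    using assms(1) by blast
  ultimately have corner: "z + (Q - P) \<in> U" if "z \<in> inner_part U (norm p + norm q)" for z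
    using inner_part_add that gauss_ints_diff[OF PQ(2,1)] by blast
  have "z1 \<in> U" "z2 \<in> U"
    using z12 by (simp_all add: inner_part_def)
  show "a z1 = a z2"
    by (rule has_step_period_lattice_path_eq[OF convex_ball assms(1) PQ
        has_step_period_uminus[OF assms(6) P Q] \<open>z2 \<in> U\<close> corner[OF z12(2)] \<open>z1 \<in> U\<close>
        corner[OF z12(1)] z1])
qed

end
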